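(* Let $1\leq i<j\leq n$ and let $\sigma\in\mathfrak{S}_n$ be such that the letter $i$ is immediately followed by the letter $j$ in the word $\sigma(1)\cdots\sigma(n)$. Let $\tau=(ij)\circ\sigma$, i.e. the permutation whose word is obtained by exchanging these two consecutive letters $i,j$ (other letters unchanged). Then $E(\Psi_n(\tau))=E(\Psi_n(\sigma))\setminus\{(i,j)\}$.
   Context: For $\sigma\in\mathfrak{S}_n$, $\Psi_n(\sigma)$ is the double poset on $\{1,\ldots,n\}$ with $a\leq_h b$ iff ($a\leq b$ and $\sigma^{-1}(a)\leq\sigma^{-1}(b)$), and $a\leq_r b$ iff ($a\leq b$ and $\sigma^{-1}(a)\geq\sigma^{-1}(b)$). For a double poset $P$, $E(P)=\{(a,b)\in P^2\mid a<_h b\}$. *)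

theory Defs
  imports "HOL-Combinatorics.Combinatorics"
begin

definition Psi_h_le :: "nat \<Rightarrow> (nat \<Rightarrow> nat) \<Rightarrow> nat \<Rightarrow> nat \<Rightarrow> bool" where
  "Psi_h_le n \<sigma> a b \<longleftrightarrow> a \<in> {1..n} \<and> b \<in> {1..n} \<and> a \<le> b \<and> inv \<sigma> a \<le> inv \<sigma> b"

definition Psi_r_le :: "nat \<Rightarrow> (nat \<Rightarrow> nat) \<Rightarrow> nat \<Rightarrow> nat \<Rightarrow> bool" where
  "Psi_r_le n \<sigma> a b \<longleftrightarrow> a \<in> {1..n} \<and> b \<in> {1..n} \<and> a \<le> b \<and> inv \<sigma> a \<ge> inv \<sigma> b"

definition E_Psi :: "nat \<Rightarrow> (nat \<Rightarrow> nat) \<Rightarrow> (nat \<times> nat) set" where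
  "E_Psi n \<sigma> = {(a, b). Psi_h_le n \<sigma> a b \<and> a \<noteq> b}"

end

theory Submission
  imports Defs
begin

text \<open>Taking inverses, \<open>\<tau>\<^sup>-\<^sup>1 = \<sigma>\<^sup>-\<^sup>1 \<circ> (i j)\<close>: the letters \<open>i\<close> and \<open>j\<close> exchange their
  positions \<open>k\<close> and \<open>k + 1\<close>, all other positions stay. As no position lies strictly between
  \<open>k\<close> and \<open>k + 1\<close>, the relative order of positions changes only for the pair \<open>{i, j}\<close>,
  so \<open>(i, j)\<close> is the only pair that leaves the first order.\<close>

lemma inv_transpose_comp:
  assumes "bij \<sigma>"
  shows "inv (Transposition.transpose i j \<circ> \<sigma>) = inv \<sigma> \<circ> Transposition.transpose i j"
  using assms by (simp add: o_inv_distrib bij_transpose)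

lemma adjacent_transpose_order_iff:
  fixes p :: "'a \<Rightarrow> nat"
  assumes "inj p" and "p i = k" and "p j = Suc k" and "{a, b} \<noteq> {i, j}"
  shows "p (Transposition.transpose i j a) \<le> p (Transposition.transpose i j b) \<longleftrightarrow> p a \<le> p b"
proof -
  have other: "p c \<noteq> k \<and> p c \<noteq> Suc k" if "c \<noteq> i" "c \<noteq> j" for c
    using that assms(1-3) by (metis injD)
  show ?thesis
    using other[of a] other[of b] assms(2-4)
    by (auto simp: transpose_def split: if_splits)
qed

theorem lemma12:
  fixes n i j :: nat and \<sigma> :: "nat \<Rightarrow> nat"
  assumes "1 \<le> i" and "i < j" and "j \<le> n"
    and "\<sigma> permutes {1..n}"
    and "\<exists>k. 1 \<le> k \<and> k < n \<and> \<sigma> k = i \<and> \<sigma> (Suc k) = j"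
  shows "E_Psi n (Transposition.transpose i j \<circ> \<sigma>) = E_Psi n \<sigma> - {(i, j)}"
proof -
  obtain k where k: "\<sigma> k = i" "\<sigma> (Suc k) = j" using assms(5) by blast
  define p where "p = inv \<sigma>"
  have pi: "p i = k" and pj: "p j = Suc k"
    unfolding p_def using permutes_inv_eq[OF assms(4)] k by blast+
  have "inj p"
    unfolding p_def using permutes_inj[OF permutes_inv[OF assms(4)]] .
  have inv_\<tau>: "inv (Transposition.transpose i j \<circ> \<sigma>) = p \<circ> Transposition.transpose i j"
    unfolding p_def using inv_transpose_comp[OF permutes_bij[OF assms(4)]] .
  have "p (Transposition.transpose i j a) \<le> p (Transposition.transpose i j b) \<longleftrightarrow>
      p a \<le> p b \<and> (a, b) \<noteq> (i, j)"
    if "a \<le> b" "a \<noteq> b" for a b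
  proof (cases "(a, b) = (i, j)")
    case True
    then show ?thesis using pi pj by auto
  next
    case False
    then have "{a, b} \<noteq> {i, j}"
      using that assms(2) by (auto simp: doubleton_eq_iff)
    then show ?thesis
      using adjacent_transpose_order_iff[OF \<open>inj p\<close> pi pj] False by simp
  qed
  then show ?thesis
    unfolding E_Psi_def Psi_h_le_def inv_\<tau> p_def[symmetric] by auto
qed

end
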